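(* Let $\delta>0$. For UCBVI-CH run for $K$ episodes, with probability at least $1-\delta$, simultaneously for all $k\in[K]$, $h\in[H+1]$ and $x\in\mathcal S$, one has $V_{k,h}(x)\ge V^*_h(x)$.
   Context: Setting: a finite-horizon episodic MDP with finite state set $\mathcal S$ ($|\mathcal S|=S$), finite action set $\mathcal A$ ($|\mathcal A|=A$), unknown transitions $P(\cdot\mid x,a)$, known deterministic reward $R:\mathcal S\times\mathcal A\to[0,1]$, horizon $H$; episodes $k=1,\dots,K$ start from arbitrary $x_{k,1}$ and $x_{k,h+1}\sim P(\cdot\mid x_{k,h},a_{k,h})$. $V^*_h(x)=\sup_\pi\mathbb E\big[\sum_{j=h}^HR(x_j,\pi(x_j,j))\mid x_h=x\big]$, $V^*_{H+1}\equiv0$; $T=KH$. UCBVI: before episode $k$, from transitions of episodes $i<k$, $N_k(x,a,y)$ counts transitions $(x,a)\to y$, $N_k(x,a)=\sum_yN_k(x,a,y)$, $\widehat P_k(y\mid x,a)=N_k(x,a,y)/N_k(x,a)$ if $N_k(x,a)>0$. $V_{k,H+1}\equiv0$, $Q_{0,h}\equiv H$; for $h=H,\dots,1$: if $N_k(x,a)>0$, $Q_{k,h}(x,a)=\min\big(Q_{k-1,h}(x,a),H,R(x,a)+\sum_y\widehat P_k(y\mid x,a)V_{k,h+1}(y)+b_{k,h}(x,a)\big)$, else $Q_{k,h}(x,a)=H$; $V_{k,h}(x)=\max_aQ_{k,h}(x,a)$; actions are chosen greedily w.r.t. $Q_{k,h}$. UCBVI-CH uses $b_{k,h}(x,a)=7HL'/\sqrt{N_k(x,a)}$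 with $L'=\ln(5SAT/\delta)$. *)

theory Defs
  imports "HOL-Probability.Probability_Mass_Function"
begin

(* A transition record (x, a, y): in state x, action a was taken, next state was y.
   An episode is the list of its H transitions; a history is the list of episodes so far
   (episode i is the i-th element, i = 1, 2, ...). *)
type_synonym ('s, 'a) trans = "'s \<times> 'a \<times> 's"

definition Ncnt :: "('s, 'a) trans list \<Rightarrow> 's \<Rightarrow> 'a \<Rightarrow> 's \<Rightarrow> nat" where
  "Ncnt D x a y = length (filter (\<lambda>t. t = (x, a, y)) D)"

definition Nsa :: "('s, 'a) trans list \<Rightarrow> 's \<Rightarrow> 'a \<Rightarrow> nat" where
  "Nsa D x a = length (filter (\<lambda>(x', a', y'). x' = x \<and> a' = a) D)"

definition Phat :: "('s, 'a) trans list \<Rightarrow> 's \<Rightarrow> 'a \<Rightarrow> 's \<Rightarrow> real" where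
  "Phat D x a y = real (Ncnt D x a y) / real (Nsa D x a)"

(* One UCBVI backup at step h, given data D, previous-episode Q (Qp) and next-step value V;
   the bonus b is a function of N_k(x,a). *)
definition Qstep :: "('s \<Rightarrow> 'a \<Rightarrow> real) \<Rightarrow> nat \<Rightarrow> (nat \<Rightarrow> real) \<Rightarrow> ('s::finite, 'a) trans list
    \<Rightarrow> (nat \<Rightarrow> 's \<Rightarrow> 'a \<Rightarrow> real) \<Rightarrow> nat \<Rightarrow> ('s \<Rightarrow> real) \<Rightarrow> 's \<Rightarrow> 'a \<Rightarrow> real" where
  "Qstep R H b D Qp h V x a =
     (if Nsa D x a = 0 then real H
      else min (Qp h x a) (min (real H)
             (R x a + (\<Sum>y\<in>UNIV. Phat D x a y * V y) + b (Nsa D x a))))"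

(* Vrem ... j x = V_{k,H+1-j}(x): value with j steps remaining (backward induction). *)
primrec Vrem :: "('s \<Rightarrow> 'a::finite \<Rightarrow> real) \<Rightarrow> nat \<Rightarrow> (nat \<Rightarrow> real) \<Rightarrow> ('s::finite, 'a) trans list
    \<Rightarrow> (nat \<Rightarrow> 's \<Rightarrow> 'a \<Rightarrow> real) \<Rightarrow> nat \<Rightarrow> 's \<Rightarrow> real" where
  "Vrem R H b D Qp 0 x = 0"
| "Vrem R H b D Qp (Suc j) x =
     Max (range (\<lambda>a. Qstep R H b D Qp (H - j) (Vrem R H b D Qp j) x a))"

(* Q_{k,h} computed from data D (episodes < k) and Qp = Q_{k-1,.} *)
definition Qnew :: "('s \<Rightarrow> 'a::finite \<Rightarrow> real) \<Rightarrow> nat \<Rightarrow> (nat \<Rightarrow> real) \<Rightarrow> ('s::finite, 'a) trans list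
    \<Rightarrow> (nat \<Rightarrow> 's \<Rightarrow> 'a \<Rightarrow> real) \<Rightarrow> nat \<Rightarrow> 's \<Rightarrow> 'a \<Rightarrow> real" where
  "Qnew R H b D Qp h x a = Qstep R H b D Qp h (Vrem R H b D Qp (H - h)) x a"

(* Qep ... hist k = Q_{k,.}; Q_{0,h} = H; Q_k uses the transitions of episodes 1..k-1 *)
primrec Qep :: "('s \<Rightarrow> 'a::finite \<Rightarrow> real) \<Rightarrow> nat \<Rightarrow> (nat \<Rightarrow> real) \<Rightarrow> ('s::finite, 'a) trans list list
    \<Rightarrow> nat \<Rightarrow> nat \<Rightarrow> 's \<Rightarrow> 'a \<Rightarrow> real" where
  "Qep R H b hist 0 = (\<lambda>h x a. real H)"
| "Qep R H b hist (Suc k) = Qnew R H b (concat (take k hist)) (Qep R H b hist k)"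

(* V_{k,h}(x) for k \<ge> 1, 1 \<le> h \<le> H+1 *)
definition Vk :: "('s \<Rightarrow> 'a::finite \<Rightarrow> real) \<Rightarrow> nat \<Rightarrow> (nat \<Rightarrow> real) \<Rightarrow> ('s::finite, 'a) trans list list
    \<Rightarrow> nat \<Rightarrow> nat \<Rightarrow> 's \<Rightarrow> real" where
  "Vk R H b hist k h x =
     Vrem R H b (concat (take (k - 1) hist)) (Qep R H b hist (k - 1)) (H + 1 - h) x"

(* Generation of episode k; with Suc j steps remaining the current step is h = H - j:
   the action is chosen greedily w.r.t. Q_{k,h}(x, .) via the tie-breaking rule tb. *)
primrec gen_ep :: "('s \<Rightarrow> 'a \<Rightarrow> 's pmf) \<Rightarrow> nat \<Rightarrow> (nat \<Rightarrow> 's \<Rightarrow> 'a \<Rightarrow> real)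
    \<Rightarrow> (('s, 'a) trans list list \<Rightarrow> nat \<Rightarrow> nat \<Rightarrow> 's \<Rightarrow> ('a \<Rightarrow> real) \<Rightarrow> 'a)
    \<Rightarrow> ('s, 'a) trans list list \<Rightarrow> nat \<Rightarrow> nat \<Rightarrow> 's \<Rightarrow> ('s, 'a) trans list pmf" where
  "gen_ep P H Q tb hist k 0 x = return_pmf []"
| "gen_ep P H Q tb hist k (Suc j) x =
     (let h = H - j; a = tb hist k h x (\<lambda>a. Q h x a) in
      bind_pmf (P x a) (\<lambda>y. map_pmf (\<lambda>rest. (x, a, y) # rest) (gen_ep P H Q tb hist k j y)))"

(* Distribution of the history of the first k episodes of UCBVI with bonus b,
   initial states x1 and greedy tie-breaking rule tb. *)
primrec run :: "('s \<Rightarrow> 'a::finite \<Rightarrow> 's::finite pmf) \<Rightarrow> ('s \<Rightarrow> 'a \<Rightarrow> real) \<Rightarrow> nat \<Rightarrow> (nat \<Rightarrow> real)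
    \<Rightarrow> (nat \<Rightarrow> 's) \<Rightarrow> (('s, 'a) trans list list \<Rightarrow> nat \<Rightarrow> nat \<Rightarrow> 's \<Rightarrow> ('a \<Rightarrow> real) \<Rightarrow> 'a)
    \<Rightarrow> nat \<Rightarrow> ('s, 'a) trans list list pmf" where
  "run P R H b x1 tb 0 = return_pmf []"
| "run P R H b x1 tb (Suc k) =
     bind_pmf (run P R H b x1 tb k) (\<lambda>hist.
       map_pmf (\<lambda>e. hist @ [e])
         (gen_ep P H (Qep R H b hist (Suc k)) tb hist (Suc k) H (x1 (Suc k))))"

(* Value of deterministic policy pol (pol x j = action at state x, step j) with j steps remaining:
   Vpi ... j x = V^pi_{H+1-j}(x). *)
primrec Vpi :: "('s \<Rightarrow> 'a \<Rightarrow> 's pmf) \<Rightarrow> ('s \<Rightarrow> 'a \<Rightarrow> real) \<Rightarrow> nat \<Rightarrow> ('s \<Rightarrow> nat \<Rightarrow> 'a)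
    \<Rightarrow> nat \<Rightarrow> 's \<Rightarrow> real" where
  "Vpi P R H pol 0 x = 0"
| "Vpi P R H pol (Suc j) x =
     (let a = pol x (H - j) in R x a + measure_pmf.expectation (P x a) (Vpi P R H pol j))"

definition Vstar :: "('s \<Rightarrow> 'a \<Rightarrow> 's pmf) \<Rightarrow> ('s \<Rightarrow> 'a \<Rightarrow> real) \<Rightarrow> nat \<Rightarrow> nat \<Rightarrow> 's \<Rightarrow> real" where
  "Vstar P R H h x = (SUP pol. Vpi P R H pol (H + 1 - h) x)"

definition bonusCH :: "nat \<Rightarrow> nat \<Rightarrow> nat \<Rightarrow> nat \<Rightarrow> real \<Rightarrow> nat \<Rightarrow> real" where
  "bonusCH S A H K \<delta> n = 7 * real H * ln (5 * real S * real A * real (K * H) / \<delta>) / sqrt (real n)"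

end

theory Submission
  imports Defs "HOL-Probability.Hoeffding"
begin

text \<open>
  Optimism is a deterministic consequence of one good event: for every step \<open>h\<close>, every pair
  \<open>(x, a)\<close> and every episode, the empirical mean of \<open>V\<^sup>*\<^sub>h\<^sub>+\<^sub>1\<close> over the earlier
  transitions from \<open>(x, a)\<close> falls short of its true mean by at most the bonus. On that event,
  backward induction on \<open>h\<close> and induction on the episode give \<open>Q\<^sub>k\<^sub>,\<^sub>h \<ge> Q\<^sup>*\<^sub>h\<close>, hence
  \<open>V\<^sub>k\<^sub>,\<^sub>h \<ge> V\<^sup>*\<^sub>h\<close>.

  The visits to \<open>(x, a)\<close> are collected adaptively, so Hoeffding's inequality for independent
  samples does not apply directly. Instead, the product of the Hoeffding exponential factors
  over the first \<open>n\<close> visits has expectation at most 1 under the run of the algorithm, because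
  each factor has conditional mean at most 1 by Hoeffding's lemma. Markov's inequality and a
  union bound over \<open>(x, a, h, n)\<close> with \<open>n \<le> KH\<close> bound the probability of the bad event by
  \<open>S A H KH exp (-98 L'\<^sup>2) \<le> \<delta>\<close>.
\<close>

lemma Nsa_Nil [simp]: "Nsa [] x a = 0"
  by (simp add: Nsa_def)

lemma Nsa_Cons [simp]:
  "Nsa (t # D) x a = (if fst t = x \<and> fst (snd t) = a then Suc (Nsa D x a) else Nsa D x a)"
  by (cases t) (auto simp: Nsa_def)

lemma Nsa_append [simp]: "Nsa (D @ E) x a = Nsa D x a + Nsa E x a"
  by (simp add: Nsa_def)

lemma Nsa_le_length: "Nsa D x a \<le> length D"
  unfolding Nsa_def by (rule length_filter_le)

definition visit_sum :: "'s \<Rightarrow> 'a \<Rightarrow> ('s \<Rightarrow> real) \<Rightarrow> ('s, 'a) trans list \<Rightarrow> real" where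
  "visit_sum x a f D = sum_list (map (\<lambda>(x', a', y). if x' = x \<and> a' = a then f y else 0) D)"

lemma visit_sum_Nil [simp]: "visit_sum x a f [] = 0"
  by (simp add: visit_sum_def)

lemma visit_sum_Cons [simp]:
  "visit_sum x a f (t # D) =
     (if fst t = x \<and> fst (snd t) = a then f (snd (snd t)) else 0) + visit_sum x a f D"
  by (cases t) (auto simp: visit_sum_def)

lemma visit_sum_affine:
  "visit_sum x a (\<lambda>y. \<alpha> - \<beta> * f y) D = real (Nsa D x a) * \<alpha> - \<beta> * visit_sum x a f D"
  by (induction D) (auto simp: algebra_simps)

lemma sum_Ncnt_mult:
  fixes D :: "('s::finite, 'a) trans list"
  shows "(\<Sum>y\<in>UNIV. real (Ncnt D x a y) * f y) = visit_sum x a f D"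
proof (induction D)
  case Nil
  then show ?case by (simp add: Ncnt_def)
next
  case (Cons t D)
  obtain x' a' y' where t: "t = (x', a', y')" by (cases t)
  have "real (Ncnt (t # D) x a y) * f y = (if t = (x, a, y) then f y else 0) + real (Ncnt D x a y) * f y"
    for y by (simp add: Ncnt_def algebra_simps)
  then have "(\<Sum>y\<in>UNIV. real (Ncnt (t # D) x a y) * f y)
      = (\<Sum>y\<in>UNIV. if t = (x, a, y) then f y else 0) + (\<Sum>y\<in>UNIV. real (Ncnt D x a y) * f y)"
    by (simp add: sum.distrib)
  also have "(\<Sum>y\<in>UNIV. if t = (x, a, y) then f y else 0) = (if x' = x \<and> a' = a then f y' else 0)"
    using t by auto
  finally show ?case using Cons t by simp
qed

lemma sum_Phat_mult:
  fixes D :: "('s::finite, 'a) trans list"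
  shows "(\<Sum>y\<in>UNIV. Phat D x a y * f y) = visit_sum x a f D / real (Nsa D x a)"
  by (simp add: Phat_def sum_divide_distrib[symmetric] sum_Ncnt_mult)

text \<open>\<open>c\<close> is the number of visits to \<open>(x, a)\<close> preceding \<open>D\<close>; the factor \<open>g\<close> is taken at
  the successors of the visits numbered \<open>c + 1, \<dots>, n\<close> only.\<close>

primrec stopped_prod ::
  "'s \<Rightarrow> 'a \<Rightarrow> nat \<Rightarrow> ('s \<Rightarrow> real) \<Rightarrow> nat \<Rightarrow> ('s, 'a) trans list \<Rightarrow> real" where
  "stopped_prod x a n g c [] = 1"
| "stopped_prod x a n g c (t # D) =
    (if fst t = x \<and> fst (snd t) = a
     then (if c < n then g (snd (snd t)) else 1) * stopped_prod x a n g (Suc c) D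
     else stopped_prod x a n g c D)"

lemma stopped_prod_append:
  "stopped_prod x a n g c (D @ E) = stopped_prod x a n g c D * stopped_prod x a n g (c + Nsa D x a) E"
  by (induction D arbitrary: c) auto

lemma stopped_prod_stopped: "n \<le> c \<Longrightarrow> stopped_prod x a n g c D = 1"
  by (induction D arbitrary: c) auto

lemma stopped_prod_exp:
  "c + Nsa D x a \<le> n \<Longrightarrow> stopped_prod x a n (\<lambda>y. exp (u y)) c D = exp (visit_sum x a u D)"
  by (induction D arbitrary: c) (auto simp: exp_add)

lemma stopped_prod_nonneg: "(\<And>y. 0 \<le> g y) \<Longrightarrow> 0 \<le> stopped_prod x a n g c D"
  by (induction D arbitrary: c) auto

definition hoeffding_weight :: "real \<Rightarrow> real \<Rightarrow> 's pmf \<Rightarrow> ('s \<Rightarrow> real) \<Rightarrow> 's \<Rightarrow> real" where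
  "hoeffding_weight C l p f y = exp (l * (measure_pmf.expectation p f - f y) - l\<^sup>2 * C\<^sup>2 / 8)"

lemma nn_integral_hoeffding_weight_le_1:
  fixes p :: "'s pmf"
  assumes f: "\<And>y. 0 \<le> f y \<and> f y \<le> C" and "0 < l"
  shows "(\<integral>\<^sup>+y. ennreal (hoeffding_weight C l p f y) \<partial>p) \<le> 1"
proof -
  interpret interval_bounded_random_variable "measure_pmf p" "\<lambda>y. - f y" "- C" 0
    by unfold_locales (use f in \<open>auto intro!: AE_pmfI\<close>)
  have "(\<integral>\<^sup>+y. ennreal (hoeffding_weight C l p f y) \<partial>p)
      = (\<integral>\<^sup>+y. ennreal (exp (l * (- f y - measure_pmf.expectation p (\<lambda>y. - f y)))) \<partial>p) * ennreal (exp (- (l\<^sup>2 * C\<^sup>2 / 8)))"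
    by (simp add: hoeffding_weight_def nn_integral_multc[symmetric] ennreal_mult'[symmetric]
        exp_add[symmetric] algebra_simps)
  also have "\<dots> \<le> ennreal (exp (l\<^sup>2 * (0 - - C)\<^sup>2 / 8)) * ennreal (exp (- (l\<^sup>2 * C\<^sup>2 / 8)))"
    by (intro mult_right_mono Hoeffdings_lemma_nn_integral) (use \<open>0 < l\<close> in auto)
  also have "\<dots> = 1"
    by (simp add: ennreal_mult'[symmetric] exp_minus field_simps)
  finally show ?thesis .
qed

lemma nn_integral_stopped_prod_gen_ep_le_1:
  fixes P :: "'s \<Rightarrow> 'a \<Rightarrow> 's pmf"
  assumes g: "\<And>y. 0 \<le> g y" and g_mean: "(\<integral>\<^sup>+y. ennreal (g y) \<partial>P x0 a0) \<le> 1"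
  shows "(\<integral>\<^sup>+e. ennreal (stopped_prod x0 a0 n g c e) \<partial>gen_ep P H Q tb hist k j x) \<le> 1"
proof (induction j arbitrary: c x)
  case 0
  then show ?case by simp
next
  case (Suc j)
  define a where "a = tb hist k (H - j) x (Q (H - j) x)"
  define c' where "c' = (if x = x0 \<and> a = a0 then Suc c else c)"
  define w where "w y = (if x = x0 \<and> a = a0 \<and> c < n then g y else 1)" for y
  have w: "0 \<le> w y" for y
    using g by (simp add: w_def)
  have "stopped_prod x0 a0 n g c ((x, a, y) # r) = w y * stopped_prod x0 a0 n g c' r" for y r
    by (simp add: w_def c'_def)
  then have "(\<integral>\<^sup>+e. ennreal (stopped_prod x0 a0 n g c e) \<partial>gen_ep P H Q tb hist k (Suc j) x)
      = (\<integral>\<^sup>+y. ennreal (w y) * (\<integral>\<^sup>+r. ennreal (stopped_prod x0 a0 n g c' r) \<partial>gen_ep P H Q tb hist k j y) \<partial>P x a)"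
    using g w by (simp add: a_def Let_def ennreal_mult' nn_integral_cmult stopped_prod_nonneg)
  also have "\<dots> \<le> (\<integral>\<^sup>+y. ennreal (w y) \<partial>P x a)"
    by (intro nn_integral_mono mult_left_le Suc.IH) auto
  also have "\<dots> \<le> 1"
    using g_mean by (cases "x = x0 \<and> a = a0 \<and> c < n") (auto simp: w_def)
  finally show ?case .
qed

lemma nn_integral_stopped_prod_run_le_1:
  fixes P :: "'s::finite \<Rightarrow> 'a::finite \<Rightarrow> 's pmf"
  assumes g: "\<And>y. 0 \<le> g y" and g_mean: "(\<integral>\<^sup>+y. ennreal (g y) \<partial>P x0 a0) \<le> 1"
  shows "(\<integral>\<^sup>+hist. ennreal (stopped_prod x0 a0 n g 0 (concat hist)) \<partial>run P R H b x1 tb k) \<le> 1"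
proof (induction k)
  case 0
  then show ?case by simp
next
  case (Suc k)
  let ?F = "\<lambda>hist. stopped_prod x0 a0 n g 0 (concat hist)"
  let ?ep = "\<lambda>hist. gen_ep P H (Qep R H b hist (Suc k)) tb hist (Suc k) H (x1 (Suc k))"
  have "(\<integral>\<^sup>+hist. ennreal (?F hist) \<partial>run P R H b x1 tb (Suc k))
     = (\<integral>\<^sup>+hist. ennreal (?F hist) *
          (\<integral>\<^sup>+e. ennreal (stopped_prod x0 a0 n g (Nsa (concat hist) x0 a0) e) \<partial>?ep hist)
        \<partial>run P R H b x1 tb k)"
    using g by (simp add: stopped_prod_append ennreal_mult' stopped_prod_nonneg nn_integral_cmult)
  also have "\<dots> \<le> (\<integral>\<^sup>+hist. ennreal (?F hist) \<partial>run P R H b x1 tb k)"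
    by (intro nn_integral_mono mult_left_le nn_integral_stopped_prod_gen_ep_le_1 g g_mean) auto
  finally show ?case
    using Suc.IH by simp
qed

lemma measure_pmf_prob_Markov:
  fixes M :: "'z pmf"
  assumes "\<And>z. 0 \<le> F z" and "(\<integral>\<^sup>+z. ennreal (F z) \<partial>M) \<le> 1" and "0 < t"
  shows "measure_pmf.prob M {z. t \<le> F z} \<le> 1 / t"
proof -
  have "{z. t \<le> F z} = {z \<in> space M. 1 \<le> ennreal (1 / t) * ennreal (F z)}"
    using assms(1,3) by (auto simp: ennreal_mult'[symmetric] field_simps simp flip: ennreal_1)
  then have "emeasure M {z. t \<le> F z} \<le> ennreal (1 / t) * (\<integral>\<^sup>+z. ennreal (F z) \<partial>M)"
    using nn_integral_Markov_inequality[where u="\<lambda>z. ennreal (F z)" and A=UNIV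
        and M="measure_pmf M" and c="ennreal (1 / t)"] by simp
  also have "\<dots> \<le> ennreal (1 / t)"
    using assms(2) by (auto intro: mult_left_le)
  finally show ?thesis
    using \<open>0 < t\<close> by (simp add: measure_pmf.emeasure_eq_measure)
qed

lemma expectation_le_const:
  fixes p :: "'s::finite pmf" and f :: "'s \<Rightarrow> real"
  assumes "\<And>y. f y \<le> c"
  shows "measure_pmf.expectation p f \<le> c"
  using assms by (intro measure_pmf.integral_le_const integrable_measure_pmf_finite AE_I2) auto

lemma expectation_ge_const:
  fixes p :: "'s::finite pmf" and f :: "'s \<Rightarrow> real"
  assumes "\<And>y. c \<le> f y"
  shows "c \<le> measure_pmf.expectation p f"
  using assms by (intro measure_pmf.integral_ge_const integrable_measure_pmf_finite AE_I2) auto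

lemma expectation_mono:
  fixes p :: "'s::finite pmf" and f g :: "'s \<Rightarrow> real"
  assumes "\<And>y. f y \<le> g y"
  shows "measure_pmf.expectation p f \<le> measure_pmf.expectation p g"
  using assms by (intro integral_mono integrable_measure_pmf_finite) auto

lemma Vpi_bounds:
  fixes P :: "'s::finite \<Rightarrow> 'a \<Rightarrow> 's pmf"
  assumes R: "\<And>x a. 0 \<le> R x a \<and> R x a \<le> 1"
  shows "0 \<le> Vpi P R H pol j x \<and> Vpi P R H pol j x \<le> real j"
proof (induction j arbitrary: x)
  case 0
  then show ?case by simp
next
  case (Suc j)
  let ?p = "P x (pol x (H - j))"
  have "0 \<le> measure_pmf.expectation ?p (Vpi P R H pol j)"
    and "measure_pmf.expectation ?p (Vpi P R H pol j) \<le> real j"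
    using Suc.IH by (auto intro: expectation_ge_const expectation_le_const)
  then show ?case
    using R[of x "pol x (H - j)"] by (simp add: Let_def)
qed

lemma bdd_above_Vpi:
  fixes P :: "'s::finite \<Rightarrow> 'a \<Rightarrow> 's pmf"
  assumes "\<And>x a. 0 \<le> R x a \<and> R x a \<le> 1"
  shows "bdd_above (range (\<lambda>pol. Vpi P R H pol j x))"
  using Vpi_bounds[where R=R, OF assms] by (intro bdd_aboveI2[where M="real j"]) blast

lemma Vpi_le_Vstar:
  fixes P :: "'s::finite \<Rightarrow> 'a \<Rightarrow> 's pmf"
  assumes "\<And>x a. 0 \<le> R x a \<and> R x a \<le> 1"
  shows "Vpi P R H pol (H + 1 - h) x \<le> Vstar P R H h x"
  unfolding Vstar_def by (rule cSUP_upper) (auto intro: bdd_above_Vpi[where R=R, OF assms])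

lemma Vstar_bounds:
  fixes P :: "'s::finite \<Rightarrow> 'a \<Rightarrow> 's pmf"
  assumes "\<And>x a. 0 \<le> R x a \<and> R x a \<le> 1"
  shows "0 \<le> Vstar P R H h x \<and> Vstar P R H h x \<le> real (H + 1 - h)"
proof
  show "0 \<le> Vstar P R H h x"
    using Vpi_bounds[where R=R, OF assms] Vpi_le_Vstar[where R=R and pol=undefined, OF assms]
    by (meson order_trans)
  show "Vstar P R H h x \<le> real (H + 1 - h)"
    unfolding Vstar_def using Vpi_bounds[where R=R, OF assms] by (intro cSUP_least) auto
qed

lemma Vstar_after_horizon [simp]: "Vstar P R H (Suc H) x = 0"
  by (simp add: Vstar_def)

definition Qstar :: "('s \<Rightarrow> 'a \<Rightarrow> 's pmf) \<Rightarrow> ('s \<Rightarrow> 'a \<Rightarrow> real) \<Rightarrow> nat \<Rightarrow> nat \<Rightarrow> 's \<Rightarrow> 'a \<Rightarrow> real" where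
  "Qstar P R H h x a = R x a + measure_pmf.expectation (P x a) (Vstar P R H (Suc h))"

lemma Qstar_le_horizon:
  fixes P :: "'s::finite \<Rightarrow> 'a \<Rightarrow> 's pmf"
  assumes R: "\<And>x a. 0 \<le> R x a \<and> R x a \<le> 1" and "1 \<le> h" "h \<le> H"
  shows "Qstar P R H h x a \<le> real H"
proof -
  have "measure_pmf.expectation (P x a) (Vstar P R H (Suc h)) \<le> real (H - h)"
    using Vstar_bounds[where R=R and h="Suc h", OF R] by (intro expectation_le_const) simp
  then show ?thesis
    using R[of x a] \<open>1 \<le> h\<close> \<open>h \<le> H\<close> by (simp add: Qstar_def of_nat_diff)
qed

lemma Vstar_le_Max_Qstar:
  fixes P :: "'s::finite \<Rightarrow> 'a::finite \<Rightarrow> 's pmf"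
  assumes R: "\<And>x a. 0 \<le> R x a \<and> R x a \<le> 1" and "h \<le> H"
  shows "Vstar P R H h x \<le> Max (range (Qstar P R H h x))"
  unfolding Vstar_def
proof (rule cSUP_least)
  fix pol
  have "H + 1 - h = Suc (H - h)" and "H - (H - h) = h"
    using \<open>h \<le> H\<close> by auto
  then have "Vpi P R H pol (H + 1 - h) x
      = R x (pol x h) + measure_pmf.expectation (P x (pol x h)) (Vpi P R H pol (H - h))"
    by (simp add: Let_def)
  also have "\<dots> \<le> Qstar P R H h x (pol x h)"
    unfolding Qstar_def using Vpi_le_Vstar[where R=R and pol=pol and h="Suc h", OF R] \<open>h \<le> H\<close>
    by (intro add_left_mono expectation_mono) (simp add: Suc_diff_le)
  also have "\<dots> \<le> Max (range (Qstar P R H h x))"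
    by (rule Max_ge) auto
  finally show "Vpi P R H pol (H + 1 - h) x \<le> Max (range (Qstar P R H h x))" .
qed simp

definition concentrated ::
  "('s::finite \<Rightarrow> 'a \<Rightarrow> 's pmf) \<Rightarrow> ('s \<Rightarrow> 'a \<Rightarrow> real) \<Rightarrow> nat \<Rightarrow> (nat \<Rightarrow> real) \<Rightarrow> ('s, 'a) trans list \<Rightarrow> bool"
where
  "concentrated P R H b D \<longleftrightarrow> (\<forall>x a h. 1 \<le> h \<longrightarrow> h \<le> H \<longrightarrow> 0 < Nsa D x a \<longrightarrow>
     measure_pmf.expectation (P x a) (Vstar P R H (Suc h)) - b (Nsa D x a)
       \<le> (\<Sum>y\<in>UNIV. Phat D x a y * Vstar P R H (Suc h) y))"

lemma Qstar_le_Qstep: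
  fixes P :: "'s::finite \<Rightarrow> 'a::finite \<Rightarrow> 's pmf"
  assumes R: "\<And>x a. 0 \<le> R x a \<and> R x a \<le> 1" and h: "1 \<le> h" "h \<le> H"
    and conc: "concentrated P R H b D"
    and Qp: "Qstar P R H h x a \<le> Qp h x a"
    and V: "\<And>y. Vstar P R H (Suc h) y \<le> V y"
  shows "Qstar P R H h x a \<le> Qstep R H b D Qp h V x a"
proof (cases "Nsa D x a = 0")
  case True
  then show ?thesis
    using Qstar_le_horizon[where R=R, OF R h] by (simp add: Qstep_def)
next
  case False
  have "Qstar P R H h x a - b (Nsa D x a) \<le> R x a + (\<Sum>y\<in>UNIV. Phat D x a y * Vstar P R H (Suc h) y)"
    using conc h False unfolding concentrated_def Qstar_def by fastforce
  also have "\<dots> \<le> R x a + (\<Sum>y\<in>UNIV. Phat D x a y * V y)"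
    by (intro add_left_mono sum_mono mult_left_mono V) (simp add: Phat_def)
  finally show ?thesis
    using False Qp Qstar_le_horizon[where R=R, OF R h] by (simp add: Qstep_def)
qed

lemma Max_range_mono:
  fixes f g :: "'a::finite \<Rightarrow> 'b::linorder"
  assumes "\<And>a. f a \<le> g a"
  shows "Max (range f) \<le> Max (range g)"
proof -
  have "f a \<le> Max (range g)" for a
  proof -
    have "g a \<le> Max (range g)"
      by (rule Max_ge) simp_all
    then show ?thesis
      using assms[of a] by order
  qed
  then show ?thesis
    by (intro Max.boundedI) auto
qed

lemma Vstar_le_Vrem:
  fixes P :: "'s::finite \<Rightarrow> 'a::finite \<Rightarrow> 's pmf"
  assumes R: "\<And>x a. 0 \<le> R x a \<and> R x a \<le> 1"
    and conc: "concentrated P R H b D"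
    and Qp: "\<And>h x a. 1 \<le> h \<Longrightarrow> h \<le> H \<Longrightarrow> Qstar P R H h x a \<le> Qp h x a"
    and "j \<le> H"
  shows "Vstar P R H (H + 1 - j) x \<le> Vrem R H b D Qp j x"
  using \<open>j \<le> H\<close>
proof (induction j arbitrary: x)
  case 0
  then show ?case by simp
next
  case (Suc j)
  have h: "1 \<le> H - j" "H - j \<le> H" and "H + 1 - Suc j = H - j" "Suc (H - j) = H + 1 - j"
    using Suc.prems by auto
  then have "Vstar P R H (H + 1 - Suc j) x \<le> Max (range (Qstar P R H (H - j) x))"
    using Vstar_le_Max_Qstar[where R=R, OF R h(2)] by simp
  also have "\<dots> \<le> Vrem R H b D Qp (Suc j) x"
    unfolding Vrem.simps
    by (intro Max_range_mono Qstar_le_Qstep[where R=R, OF R h conc] Qp h)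
      (use Suc \<open>Suc (H - j) = H + 1 - j\<close> in auto)
  finally show ?case .
qed

lemma Qstar_le_Qep:
  fixes P :: "'s::finite \<Rightarrow> 'a::finite \<Rightarrow> 's pmf"
  assumes R: "\<And>x a. 0 \<le> R x a \<and> R x a \<le> 1"
    and "\<forall>i<k. concentrated P R H b (concat (take i hist))" and "1 \<le> h" "h \<le> H"
  shows "Qstar P R H h x a \<le> Qep R H b hist k h x a"
  using assms(2-)
proof (induction k arbitrary: h x a)
  case 0
  then show ?case
    using Qstar_le_horizon[where R=R, OF R] by simp
next
  case (Suc k)
  let ?D = "concat (take k hist)" and ?Qp = "Qep R H b hist k"
  have conc: "concentrated P R H b ?D"
    using Suc.prems by simp
  have Qp: "\<And>h x a. 1 \<le> h \<Longrightarrow> h \<le> H \<Longrightarrow> Qstar P R H h x a \<le> ?Qp h x a"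
    using Suc by simp
  have "Vstar P R H (H + 1 - (H - h)) y \<le> Vrem R H b ?D ?Qp (H - h) y" for y
    by (rule Vstar_le_Vrem[where R=R, OF R conc Qp]) auto
  moreover have "H + 1 - (H - h) = Suc h"
    using Suc.prems by simp
  ultimately show ?case
    unfolding Qep.simps Qnew_def
    by (intro Qstar_le_Qstep[where R=R, OF R Suc.prems(2,3) conc] Qp Suc.prems(2,3)) simp
qed

lemma Vstar_le_Vk:
  fixes P :: "'s::finite \<Rightarrow> 'a::finite \<Rightarrow> 's pmf"
  assumes R: "\<And>x a. 0 \<le> R x a \<and> R x a \<le> 1"
    and conc: "\<forall>i<K. concentrated P R H b (concat (take i hist))"
    and "k \<in> {1..K}" "h \<in> {1..H + 1}"
  shows "Vstar P R H h x \<le> Vk R H b hist k h x"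
proof -
  have "Vstar P R H (H + 1 - (H + 1 - h)) x
      \<le> Vrem R H b (concat (take (k - 1) hist)) (Qep R H b hist (k - 1)) (H + 1 - h) x"
    using assms by (intro Vstar_le_Vrem[where R=R, OF R] Qstar_le_Qep[where R=R, OF R]) auto
  then show ?thesis
    using \<open>h \<in> {1..H + 1}\<close> by (simp add: Vk_def)
qed

lemma gen_ep_length: "e \<in> set_pmf (gen_ep P H Q tb hist k j x) \<Longrightarrow> length e = j"
  by (induction j arbitrary: x e) (auto simp: Let_def)

lemma run_length: "hist \<in> set_pmf (run P R H b x1 tb k) \<Longrightarrow> length (concat hist) = k * H"
  by (induction k arbitrary: hist) (auto dest: gen_ep_length)

lemma large_stopped_prod_if_not_concentrated:
  fixes P :: "'s::finite \<Rightarrow> 'a::finite \<Rightarrow> 's pmf"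
  assumes "0 < H" and b: "\<And>n. b n = \<beta> / sqrt (real n)" and "0 \<le> \<beta>"
    and "\<not> concentrated P R H b (concat (take i hist))"
  obtains x a h n where "h \<in> {1..H}" "n \<in> {1..length (concat hist)}"
    "exp (2 * \<beta>\<^sup>2 / (real H)\<^sup>2) \<le> stopped_prod x a n
       (hoeffding_weight H (4 * b n / (real H)\<^sup>2) (P x a) (Vstar P R H (Suc h))) 0 (concat hist)"
proof -
  define D where "D = concat (take i hist)"
  obtain x a h where h: "h \<in> {1..H}" and pos: "0 < Nsa D x a"
    and viol: "(\<Sum>y\<in>UNIV. Phat D x a y * Vstar P R H (Suc h) y)
       < measure_pmf.expectation (P x a) (Vstar P R H (Suc h)) - b (Nsa D x a)"
    using assms(4) unfolding concentrated_def D_def by (auto simp: not_le)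
  define n where "n = Nsa D x a"
  define f where "f = Vstar P R H (Suc h)"
  define m where "m = measure_pmf.expectation (P x a) f"
  \<comment> \<open>Chernoff parameter, chosen so that \<open>n (l b\<^sub>n - l\<^sup>2 H\<^sup>2 / 8) = 2 \<beta>\<^sup>2 / H\<^sup>2\<close>.\<close>
  define l where "l = 4 * b n / (real H)\<^sup>2"
  have split: "concat hist = D @ concat (drop i hist)"
    by (simp add: D_def flip: concat_append)
  have "n \<le> length (concat hist)"
    using Nsa_le_length[of D x a] by (simp add: split n_def)
  have "visit_sum x a f D < real n * (m - b n)"
    using viol pos by (simp add: sum_Phat_mult divide_less_eq mult.commute n_def f_def m_def)
  moreover have "0 \<le> l"
    using \<open>0 \<le> \<beta>\<close> by (simp add: l_def b)
  ultimately have "l * visit_sum x a f D \<le> l * (real n * (m - b n))"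
    by (intro mult_left_mono) auto
  moreover have "real n * l * b n - real n * l\<^sup>2 * (real H)\<^sup>2 / 8 = 2 * \<beta>\<^sup>2 / (real H)\<^sup>2"
    using pos \<open>0 < H\<close> by (simp add: l_def b n_def field_simps power2_eq_square real_sqrt_mult_self)
  ultimately have "exp (2 * \<beta>\<^sup>2 / (real H)\<^sup>2)
      \<le> exp (visit_sum x a (\<lambda>y. (l * m - l\<^sup>2 * (real H)\<^sup>2 / 8) - l * f y) D)"
    unfolding visit_sum_affine n_def[symmetric] by (simp add: algebra_simps)
  also have "\<dots> = stopped_prod x a n (\<lambda>y. exp ((l * m - l\<^sup>2 * (real H)\<^sup>2 / 8) - l * f y)) 0 D"
    by (simp add: stopped_prod_exp n_def)
  also have "(\<lambda>y. exp ((l * m - l\<^sup>2 * (real H)\<^sup>2 / 8) - l * f y)) = hoeffding_weight H l (P x a) f"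
    by (simp add: fun_eq_iff hoeffding_weight_def m_def algebra_simps)
  also have "stopped_prod x a n (hoeffding_weight H l (P x a) f) 0 D
      = stopped_prod x a n (hoeffding_weight H l (P x a) f) 0 (concat hist)"
    by (simp add: split stopped_prod_append stopped_prod_stopped n_def)
  finally show ?thesis
    using h pos \<open>n \<le> length (concat hist)\<close> unfolding l_def f_def
    by (intro that[where x=x and a=a and h=h and n=n]) (auto simp: n_def)
qed

lemma prob_stopped_prod_hoeffding_weight_ge_le:
  fixes P :: "'s::finite \<Rightarrow> 'a::finite \<Rightarrow> 's pmf"
  assumes "\<And>y. 0 \<le> f y \<and> f y \<le> C" and "0 < l" and "0 < t"
  shows "measure_pmf.prob (run P R H b x1 tb K)
           {hist. t \<le> stopped_prod x a n (hoeffding_weight C l (P x a) f) 0 (concat hist)} \<le> 1 / t"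
proof -
  have "(\<integral>\<^sup>+y. ennreal (hoeffding_weight C l (P x a) f y) \<partial>P x a) \<le> 1"
    using assms(1,2) by (rule nn_integral_hoeffding_weight_le_1)
  then have "(\<integral>\<^sup>+hist. ennreal (stopped_prod x a n (hoeffding_weight C l (P x a) f) 0 (concat hist))
      \<partial>run P R H b x1 tb K) \<le> 1"
    by (intro nn_integral_stopped_prod_run_le_1) (simp_all add: hoeffding_weight_def)
  then show ?thesis
    using \<open>0 < t\<close> by (intro measure_pmf_prob_Markov stopped_prod_nonneg) (simp_all add: hoeffding_weight_def)
qed

lemma prob_not_concentrated_le:
  fixes P :: "'s::finite \<Rightarrow> 'a::finite \<Rightarrow> 's pmf"
  assumes R: "\<And>x a. 0 \<le> R x a \<and> R x a \<le> 1" and "0 < H"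
    and b: "\<And>n. b n = \<beta> / sqrt (real n)" and "0 < \<beta>"
  shows "measure_pmf.prob (run P R H b x1 tb K)
           {hist. \<exists>i<K. \<not> concentrated P R H b (concat (take i hist))}
         \<le> real (CARD('s) * CARD('a) * H * (K * H)) * exp (- (2 * \<beta>\<^sup>2 / (real H)\<^sup>2))"
proof -
  let ?M = "run P R H b x1 tb K" and ?t = "exp (2 * \<beta>\<^sup>2 / (real H)\<^sup>2)"
  let ?F = "\<lambda>x a h n hist. stopped_prod x a n
              (hoeffding_weight H (4 * b n / (real H)\<^sup>2) (P x a) (Vstar P R H (Suc h))) 0 (concat hist)"
  define I where "I = (UNIV :: 's set) \<times> (UNIV :: 'a set) \<times> {1..H} \<times> {1..K * H}"
  define bad where "bad = (\<lambda>(x, a, h, n). {hist. ?t \<le> ?F x a h n hist})"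
  have bad_prob: "measure_pmf.prob ?M (bad i) \<le> 1 / ?t" if "i \<in> I" for i
  proof -
    obtain x a h n where i: "i = (x, a, h, n)" and "h \<in> {1..H}" "n \<in> {1..K * H}"
      using \<open>i \<in> I\<close> unfolding I_def by auto
    have "0 \<le> Vstar P R H (Suc h) y \<and> Vstar P R H (Suc h) y \<le> real H" for y
    proof -
      have "real (H + 1 - Suc h) \<le> real H"
        by simp
      then show ?thesis
        using Vstar_bounds[where R=R and P=P and H=H and h="Suc h" and x=y, OF R] by linarith
    qed
    moreover have "0 < 4 * b n / (real H)\<^sup>2"
      using \<open>n \<in> {1..K * H}\<close> \<open>0 < \<beta>\<close> \<open>0 < H\<close> by (simp add: b)
    ultimately show ?thesis
      unfolding i bad_def prod.case by (intro prob_stopped_prod_hoeffding_weight_ge_le) simp_all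
  qed
  have "{hist. \<exists>i<K. \<not> concentrated P R H b (concat (take i hist))} \<inter> set_pmf ?M \<subseteq> (\<Union>i\<in>I. bad i)"
  proof
    fix hist
    assume "hist \<in> {hist. \<exists>i<K. \<not> concentrated P R H b (concat (take i hist))} \<inter> set_pmf ?M"
    then obtain i where "hist \<in> set_pmf ?M" and not_conc: "\<not> concentrated P R H b (concat (take i hist))"
      by blast
    moreover obtain x a h n where "h \<in> {1..H}" "n \<in> {1..length (concat hist)}" "?t \<le> ?F x a h n hist"
      by (rule large_stopped_prod_if_not_concentrated[OF \<open>0 < H\<close> b less_imp_le[OF \<open>0 < \<beta>\<close>] not_conc])
    ultimately show "hist \<in> (\<Union>i\<in>I. bad i)"
      unfolding I_def bad_def by (intro UN_I[of "(x, a, h, n)"]) (auto simp: run_length)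
  qed
  then have "measure_pmf.prob ?M {hist. \<exists>i<K. \<not> concentrated P R H b (concat (take i hist))}
      \<le> measure_pmf.prob ?M (\<Union>i\<in>I. bad i)"
    by (subst measure_Int_set_pmf[symmetric]) (rule measure_pmf.finite_measure_mono, auto)
  also have "\<dots> \<le> (\<Sum>i\<in>I. measure_pmf.prob ?M (bad i))"
    by (rule measure_pmf.finite_measure_subadditive_finite) (auto simp: I_def)
  also have "\<dots> \<le> (\<Sum>i\<in>I. 1 / ?t)"
    by (rule sum_mono) (rule bad_prob)
  also have "\<dots> = real (CARD('s) * CARD('a) * H * (K * H)) * exp (- (2 * \<beta>\<^sup>2 / (real H)\<^sup>2))"
    by (simp add: I_def card_cartesian_product exp_minus inverse_eq_divide)
  finally show ?thesis .
qed

lemma confidence_radius_bounds: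
  fixes S A H K :: nat and \<delta> :: real
  assumes "1 \<le> S" "1 \<le> A" "1 \<le> H" "1 \<le> K" "0 < \<delta>" "\<delta> < 1"
  defines "X \<equiv> 5 * real S * real A * real (K * H) / \<delta>"
  shows "exp 1 \<le> X" and "real (S * A * H * (K * H)) \<le> \<delta> * X\<^sup>2"
proof -
  define m where "m = S * A * (K * H)"
  have "1 \<le> m"
    using assms(1-4) by (simp add: m_def)
  have X: "X = 5 * real m / \<delta>"
    by (simp add: X_def m_def)
  have "exp 1 \<le> 5 * real m"
    using exp_le \<open>1 \<le> m\<close> by linarith
  also have "\<dots> \<le> X"
    unfolding X using \<open>0 < \<delta>\<close> \<open>\<delta> < 1\<close> by (simp add: le_divide_eq mult_left_le)
  finally show "exp 1 \<le> X" .
  have "1 \<le> S * A"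
    using assms(1,2) by simp
  then have "S * A * H \<le> m" and "1 * (K * H) \<le> m"
    unfolding m_def using \<open>1 \<le> K\<close> by (intro mult_le_mono; simp)+
  then have "S * A * H * (K * H) \<le> m * m"
    using mult_le_mono[of "S * A * H" m "K * H" m] by simp
  then have "real (S * A * H * (K * H)) \<le> real m * real m"
    by (simp flip: of_nat_mult)
  also have "\<dots> \<le> 25 * (real m * real m) / \<delta>"
    using \<open>0 < \<delta>\<close> \<open>\<delta> < 1\<close> mult_left_mono[of \<delta> 25 "real m * real m"]
    by (simp add: le_divide_eq mult.commute)
  also have "\<dots> = \<delta> * X\<^sup>2"
    unfolding X using \<open>0 < \<delta>\<close> by (simp add: field_simps power2_eq_square)
  finally show "real (S * A * H * (K * H)) \<le> \<delta> * X\<^sup>2" .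
qed

lemma mult_exp_neg_ln_sq_le:
  fixes N X \<delta> :: real
  assumes "exp 1 \<le> X" "0 \<le> N" "N \<le> \<delta> * X\<^sup>2"
  shows "N * exp (- (98 * (ln X)\<^sup>2)) \<le> \<delta>"
proof -
  have "0 < X"
    using assms(1) exp_gt_zero[of 1] by linarith
  then have "1 \<le> ln X"
    using assms(1) by (simp add: ln_ge_iff)
  then have "2 * ln X \<le> 98 * (ln X)\<^sup>2"
    using mult_left_mono[of 1 "ln X" "ln X"] by (simp add: power2_eq_square)
  then have "X\<^sup>2 \<le> exp (98 * (ln X)\<^sup>2)"
    using \<open>0 < X\<close> by (metis exp_double exp_ln exp_le_cancel_iff)
  then have "N * X\<^sup>2 \<le> \<delta> * X\<^sup>2 * exp (98 * (ln X)\<^sup>2)"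
    using assms(2,3) by (meson mult_mono exp_ge_zero order.trans zero_le_power2)
  then show ?thesis
    using \<open>0 < X\<close> by (simp add: exp_minus field_simps)
qed

lemma prob_not_concentrated_bonusCH_le:
  fixes P :: "'s::finite \<Rightarrow> 'a::finite \<Rightarrow> 's pmf"
  assumes R: "\<And>x a. 0 \<le> R x a \<and> R x a \<le> 1"
    and "0 < \<delta>" "\<delta> < 1" "1 \<le> H" "1 \<le> K"
  shows "measure_pmf.prob (run P R H (bonusCH CARD('s) CARD('a) H K \<delta>) x1 tb K)
           {hist. \<exists>i<K. \<not> concentrated P R H (bonusCH CARD('s) CARD('a) H K \<delta>) (concat (take i hist))}
         \<le> \<delta>"
proof -
  let ?N = "real (CARD('s) * CARD('a) * H * (K * H))"
  define X where "X = 5 * real CARD('s) * real CARD('a) * real (K * H) / \<delta>"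
  have "exp 1 \<le> X" and "?N \<le> \<delta> * X\<^sup>2"
    using confidence_radius_bounds[of "CARD('s)" "CARD('a)" H K \<delta>] assms(2-)
    by (simp_all add: X_def Suc_le_eq)
  then have "0 < ln X"
    using exp_gt_one[of 1] by (intro ln_gt_zero) linarith
  have "measure_pmf.prob (run P R H (bonusCH CARD('s) CARD('a) H K \<delta>) x1 tb K)
          {hist. \<exists>i<K. \<not> concentrated P R H (bonusCH CARD('s) CARD('a) H K \<delta>) (concat (take i hist))}
      \<le> ?N * exp (- (2 * (7 * real H * ln X)\<^sup>2 / (real H)\<^sup>2))"
    using \<open>0 < ln X\<close> \<open>1 \<le> H\<close>
    by (intro prob_not_concentrated_le[where R=R, OF R]) (auto simp: bonusCH_def X_def)
  also have "\<dots> = ?N * exp (- (98 * (ln X)\<^sup>2))"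
    using \<open>1 \<le> H\<close> by (simp add: power_mult_distrib)
  also have "\<dots> \<le> \<delta>"
    by (rule mult_exp_neg_ln_sq_le[OF \<open>exp 1 \<le> X\<close> _ \<open>?N \<le> \<delta> * X\<^sup>2\<close>]) simp
  finally show ?thesis .
qed

lemma prob_optimistic_ge:
  fixes P :: "'s::finite \<Rightarrow> 'a::finite \<Rightarrow> 's pmf" and M :: "('s, 'a) trans list list pmf"
  assumes "\<And>x a. 0 \<le> R x a \<and> R x a \<le> 1"
  shows "1 - measure_pmf.prob M {hist. \<exists>i<K. \<not> concentrated P R H b (concat (take i hist))}
         \<le> measure_pmf.prob M
             {hist. \<forall>k\<in>{1..K}. \<forall>h\<in>{1..H+1}. \<forall>x. Vk R H b hist k h x \<ge> Vstar P R H h x}"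
    (is "1 - measure_pmf.prob M ?B \<le> measure_pmf.prob M ?T")
proof -
  have "measure_pmf.prob M (UNIV - ?T) \<le> measure_pmf.prob M ?B"
    using Vstar_le_Vk[where R=R, OF assms] by (intro measure_pmf.finite_measure_mono) auto
  moreover have "measure_pmf.prob M (UNIV - ?T) = 1 - measure_pmf.prob M ?T"
    using measure_pmf.prob_compl[of ?T M] by simp
  ultimately show ?thesis
    by linarith
qed

theorem mainTheorem3:
  fixes P :: "'s::finite \<Rightarrow> 'a::finite \<Rightarrow> 's pmf"
    and R :: "'s \<Rightarrow> 'a \<Rightarrow> real"
    and H K :: nat and \<delta> :: real
    and x1 :: "nat \<Rightarrow> 's"
    and tb :: "('s, 'a) trans list list \<Rightarrow> nat \<Rightarrow> nat \<Rightarrow> 's \<Rightarrow> ('a \<Rightarrow> real) \<Rightarrow> 'a"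
  assumes "\<delta> > 0"
    and "H \<ge> 1"
    and "\<And>x a. 0 \<le> R x a \<and> R x a \<le> 1"
    and greedy: "\<And>hist k h x f a. f a \<le> f (tb hist k h x f)"
  shows "measure_pmf.prob
           (run P R H (bonusCH CARD('s) CARD('a) H K \<delta>) x1 tb K)
           {hist. \<forall>k\<in>{1..K}. \<forall>h\<in>{1..H+1}. \<forall>x.
              Vk R H (bonusCH CARD('s) CARD('a) H K \<delta>) hist k h x \<ge> Vstar P R H h x}
         \<ge> 1 - \<delta>"
\<comment> \<open>Optimism holds for every action-selection rule.\<close>
proof (cases "\<delta> < 1 \<and> 1 \<le> K")
  case False
  then consider "1 \<le> \<delta>" | "K = 0"
    by linarith
  then show ?thesis
    using \<open>0 < \<delta>\<close> by cases (auto intro: order_trans[OF _ measure_nonneg])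
next
  case True
  let ?b = "bonusCH CARD('s) CARD('a) H K \<delta>"
  have "1 - \<delta> \<le> 1 - measure_pmf.prob (run P R H ?b x1 tb K)
                    {hist. \<exists>i<K. \<not> concentrated P R H ?b (concat (take i hist))}"
    using prob_not_concentrated_bonusCH_le[where R=R, OF assms(3) \<open>0 < \<delta>\<close> _ \<open>1 \<le> H\<close>] True
    by (simp add: Suc_le_eq)
  also have "\<dots> \<le> measure_pmf.prob (run P R H ?b x1 tb K)
                 {hist. \<forall>k\<in>{1..K}. \<forall>h\<in>{1..H+1}. \<forall>x. Vk R H ?b hist k h x \<ge> Vstar P R H h x}"
    by (rule prob_optimistic_ge[where R=R, OF assms(3)])
  finally show ?thesis .
qed

end
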